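(* (1) For all $1\le i,j\le d$, $v^{ij}(-1,-1)\mathbf 1=2L_r^{ij}(-2)\mathbf 1$ in $M_r$. (2) For $1\le i,j\le d$ with $i\ne j$ and $m,n\in\mathbb Z_{<0}$, $v^{ij}(m-1,n)\mathbf 1=-\frac1m L_r^{ii}(-1)v^{ij}(m,n)\mathbf 1$. (3) For $1\le i,j\le d$ with $i\ne j$ and $m,n\in\mathbb Z_{<0}$, $v^{ii}(m-1,n)\mathbf 1=\frac{2}{m(m+n-1)}L_r^{ii}(0)L_r^{ij}(-1)v^{ij}(n,m)\mathbf 1$.
   Context: Fix an integer $d\ge 2$ and $r\in\mathbb{C}$. Let $\hat{\mathfrak h}$ be the complex Lie algebra with basis $\{v^i(m)\mid 1\le i\le d,\ m\in\mathbb{Z}\}\cup\{\mathbf c\}$ and bracket $[v^i(m),v^j(n)]=\delta_{m+n,0}\delta_{i,j}\,m\,\mathbf c$, $[\mathbf c,\hat{\mathfrak h}]=0$. In $A=U(\hat{\mathfrak h})/\langle \mathbf c-1\rangle$ let $v^{ij}(m,n)$ be the image of $v^i(m)v^j(n)$; then $v^{ij}(m,n)=v^{ji}(n,m)$ unless $i=j$ and $m=-n$, and $v^{ii}(m,-m)=v^{ii}(-m,m)+m$. Let $\mathcal B=\{v^{ii}(m,n)\mid 1\le i\le d,\ m\le n\}\cup\{v^{ij}(m,n)\mid 1\le i<j\le d,\ m,n\in\mathbb Z\}$; then $\mathcal B\cup\{1\}$ is linearly independent, $\mathcal L:=\mathrm{span}_{\mathbb C}\mathcal B\oplus\mathbb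 C\subset A$ contains every $v^{ij}(m,n)$ and is closed under $[x,y]=xy-yx$. With $\pi_1,\pi_2$ the projections of $\mathcal L$ onto $\mathrm{span}\,\mathcal B$ and onto $\mathbb C$, $[x,y]_r=\pi_1([x,y])+r\pi_2([x,y])$ is a Lie bracket on $\mathcal L$; call this Lie algebra $\mathcal L_r$. Let $\mathcal B_+=\{v^{ij}(m,n)\in\mathcal B\mid m\ge 0\text{ or }n\ge 0\}$, $\mathcal L_r^+=\mathrm{span}\,\mathcal B_+\oplus\mathbb C$, and $M_r=U(\mathcal L_r)\otimes_{U(\mathcal L_r^+)}\mathbb C\mathbf 1$, where $\mathcal B_+$ acts by $0$ on $\mathbf 1$ and $s\in\mathbb C\subset\mathcal L_r$ acts by the scalar $s$. Define operators on $M_r$: $L_r^{ij}(m)=\frac12\sum_{h\in\mathbb Z}v^{ij}(m-h,h)$ if $i\ne j$ or $m\ne0$, and $L_r^{ii}(0)=\frac12 v^{ii}(0,0)+\sum_{h>0}v^{ii}(-h,h)$ (on each vector only finitely many terms are nonzero). *)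

theory Defs
  imports Complex_Main
begin

text \<open>
  A representation of the Lie algebra L_r on a complex vector space V (with scalar
  multiplication scale) is encoded by operators rho i j m n, the image of the
  generator v^{ij}(m,n) of L_r, for all 1 <= i,j <= d and all integers m,n.
  The constant s in C (a subset of L_r) is required to act as the scalar s.
\<close>

text \<open>Constant part of v^{ab}(x,y) when written in the basis B together with 1:
  v^{aa}(x,-x) = v^{aa}(-x,x) + x for x > 0; all other generators have zero constant part.\<close>
definition gconst :: "nat \<Rightarrow> nat \<Rightarrow> int \<Rightarrow> int \<Rightarrow> complex" where
  "gconst a b x y = (if a = b \<and> x + y = 0 \<and> x > 0 then of_int x else 0)"

text \<open>Image under rho of pi1(z) + r pi2(z) for z = v^{ab}(x,y); since rho(c) = c,
  this is rho(z) + (r - 1) pi2(z).\<close>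
definition rimg ::
  "complex \<Rightarrow> (complex \<Rightarrow> 'v \<Rightarrow> 'v) \<Rightarrow> (nat \<Rightarrow> nat \<Rightarrow> int \<Rightarrow> int \<Rightarrow> 'v \<Rightarrow> 'v::ab_group_add)
    \<Rightarrow> nat \<Rightarrow> nat \<Rightarrow> int \<Rightarrow> int \<Rightarrow> 'v \<Rightarrow> 'v" where
  "rimg r scale rho a b x y u = rho a b x y u + scale ((r - 1) * gconst a b x y) u"

definition is_Lr_rep ::
  "complex \<Rightarrow> nat \<Rightarrow> (complex \<Rightarrow> 'v \<Rightarrow> 'v) \<Rightarrow> (nat \<Rightarrow> nat \<Rightarrow> int \<Rightarrow> int \<Rightarrow> 'v \<Rightarrow> 'v::ab_group_add)
     \<Rightarrow> bool" where
  "is_Lr_rep r d scale rho \<longleftrightarrow>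
     vector_space scale \<and>
     (\<forall>i\<in>{1..d}. \<forall>j\<in>{1..d}. \<forall>m n. Vector_Spaces.linear scale scale (rho i j m n)) \<and>
     (\<forall>i\<in>{1..d}. \<forall>j\<in>{1..d}. \<forall>m n. \<not> (i = j \<and> m + n = 0) \<longrightarrow> rho i j m n = rho j i n m) \<and>
     (\<forall>i\<in>{1..d}. \<forall>m u. rho i i m (- m) u = rho i i (- m) m u + scale (of_int m) u) \<and>
     (\<forall>i\<in>{1..d}. \<forall>j\<in>{1..d}. \<forall>k\<in>{1..d}. \<forall>l\<in>{1..d}. \<forall>m n p q u.
        rho i j m n (rho k l p q u) - rho k l p q (rho i j m n u) =
          (if j = k \<and> n + p = 0 then scale (of_int n) (rimg r scale rho i l m q u) else 0)
        + (if j = l \<and> n + q = 0 then scale (of_int n) (rimg r scale rho i k m p u) else 0)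
        + (if i = k \<and> m + p = 0 then scale (of_int m) (rimg r scale rho l j q n u) else 0)
        + (if i = l \<and> m + q = 0 then scale (of_int m) (rimg r scale rho k j p n u) else 0))"

text \<open>w behaves like the generating vector 1 of M_r: every element of B_+ kills it.\<close>
definition hw_vector ::
  "nat \<Rightarrow> (nat \<Rightarrow> nat \<Rightarrow> int \<Rightarrow> int \<Rightarrow> 'v \<Rightarrow> 'v::zero) \<Rightarrow> 'v \<Rightarrow> bool" where
  "hw_vector d rho w \<longleftrightarrow>
     (\<forall>i\<in>{1..d}. \<forall>j\<in>{1..d}. \<forall>m n.
        (i < j \<or> (i = j \<and> m \<le> n)) \<and> (0 \<le> m \<or> 0 \<le> n) \<longrightarrow> rho i j m n w = 0)"

definition fsum :: "(int \<Rightarrow> 'v::ab_group_add) \<Rightarrow> 'v" where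
  "fsum f = sum f {h. f h \<noteq> 0}"

definition Lop ::
  "(complex \<Rightarrow> 'v \<Rightarrow> 'v) \<Rightarrow> (nat \<Rightarrow> nat \<Rightarrow> int \<Rightarrow> int \<Rightarrow> 'v \<Rightarrow> 'v::ab_group_add)
     \<Rightarrow> nat \<Rightarrow> nat \<Rightarrow> int \<Rightarrow> 'v \<Rightarrow> 'v" where
  "Lop scale rho i j m u =
     (if i \<noteq> j \<or> m \<noteq> 0 then scale (1/2) (fsum (\<lambda>h. rho i j (m - h) h u))
      else scale (1/2) (rho i i 0 0 u) + fsum (\<lambda>h. if 0 < h then rho i i (- h) h u else 0))"

end

theory Submission
  imports Defs
begin

text \<open>
  Every summand v(m-h,h) of L(-1) and L(0) has a non-negative index and so annihilates
  the vacuum; applied to v(p,q)1 with p, q < 0 it therefore acts through its commutator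
  with v(p,q), which vanishes except for the one or two h matching a Kronecker delta.
  The integer factors attached to those deltas are the constants of the statement, and
  the central parameter r never enters because no v^{ii}(a,-a) with a > 0 arises.
  On 1 itself, L(-2) keeps only its summand h = -1.
\<close>

lemma fsum_eq_sum:
  assumes "finite S" and "{h. f h \<noteq> 0} \<subseteq> S"
  shows "fsum f = sum f S"
  unfolding fsum_def using assms by (intro sum.mono_neutral_left) auto

lemma fsum_two_points:
  assumes "\<And>h. f h = (if h = a then x else 0) + (if h = b then y else 0)"
  shows "fsum f = x + y"
proof -
  have "fsum f = sum f {a, b}"
    using assms by (intro fsum_eq_sum) auto
  also have "\<dots> = (\<Sum>h\<in>{a, b}. if h = a then x else 0) + (\<Sum>h\<in>{a, b}. if h = b then y else 0)"
    unfolding assms by (rule sum.distrib)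
  also have "\<dots> = x + y" by (simp add: sum.delta')
  finally show ?thesis .
qed

lemma (in vector_space) fsum_scale: "fsum (\<lambda>h. scale c (f h)) = scale c (fsum f)"
proof (cases "c = 0")
  case False
  then have "{h. scale c (f h) \<noteq> 0} = {h. f h \<noteq> 0}"
    by (metis scale_eq_0_iff)
  then show ?thesis unfolding fsum_def by (simp add: scale_sum_right)
qed (simp add: fsum_def)

locale Lr_module =
  fixes r :: complex and d :: nat
    and scale :: "complex \<Rightarrow> 'v::ab_group_add \<Rightarrow> 'v"
    and rho :: "nat \<Rightarrow> nat \<Rightarrow> int \<Rightarrow> int \<Rightarrow> 'v \<Rightarrow> 'v"
  assumes Lr_rep: "is_Lr_rep r d scale rho"
begin

sublocale vector_space scale
  using Lr_rep unfolding is_Lr_rep_def by blast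

lemma rho_linear: "i \<in> {1..d} \<Longrightarrow> j \<in> {1..d} \<Longrightarrow> Vector_Spaces.linear scale scale (rho i j m n)"
  using Lr_rep unfolding is_Lr_rep_def by blast

lemma rho_add:
  assumes "i \<in> {1..d}" "j \<in> {1..d}"
  shows "rho i j m n (x + y) = rho i j m n x + rho i j m n y"
  using rho_linear[OF assms] by (simp add: Vector_Spaces.linear_iff)

lemma rho_scale:
  assumes "i \<in> {1..d}" "j \<in> {1..d}"
  shows "rho i j m n (scale c x) = scale c (rho i j m n x)"
  using rho_linear[OF assms] by (simp add: Vector_Spaces.linear_iff)

lemma rho_zero: "i \<in> {1..d} \<Longrightarrow> j \<in> {1..d} \<Longrightarrow> rho i j m n 0 = 0"
  using rho_scale[of i j m n 0 0] by simp

lemma rho_swap: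
  "i \<in> {1..d} \<Longrightarrow> j \<in> {1..d} \<Longrightarrow> \<not> (i = j \<and> m + n = 0) \<Longrightarrow> rho i j m n = rho j i n m"
  using Lr_rep unfolding is_Lr_rep_def by blast

lemma rho_commutator:
  assumes "i \<in> {1..d}" "j \<in> {1..d}" "k \<in> {1..d}" "l \<in> {1..d}"
  shows "rho i j m n (rho k l p q u) - rho k l p q (rho i j m n u) =
          (if j = k \<and> n + p = 0 then scale (of_int n) (rimg r scale rho i l m q u) else 0)
        + (if j = l \<and> n + q = 0 then scale (of_int n) (rimg r scale rho i k m p u) else 0)
        + (if i = k \<and> m + p = 0 then scale (of_int m) (rimg r scale rho l j q n u) else 0)
        + (if i = l \<and> m + q = 0 then scale (of_int m) (rimg r scale rho k j p n u) else 0)"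
  using Lr_rep assms unfolding is_Lr_rep_def by blast

lemma rimg_eq_rho: "\<not> (a = b \<and> x + y = 0 \<and> 0 < x) \<Longrightarrow> rimg r scale rho a b x y u = rho a b x y u"
  unfolding rimg_def gconst_def by auto

lemma Lop_ii_0_scale_cong:
  assumes "\<And>k. 0 \<le> k \<Longrightarrow> rho i i (-k) k u = scale c (rho i i (-k) k v)"
  shows "Lop scale rho i i 0 u = scale c (Lop scale rho i i 0 v)"
proof -
  have "(\<lambda>h. if 0 < h then rho i i (-h) h u else 0)
          = (\<lambda>h. scale c (if 0 < h then rho i i (-h) h v else 0))"
    using assms by (auto simp: fun_eq_iff)
  moreover have "rho i i 0 0 u = scale c (rho i i 0 0 v)" using assms[of 0] by simp
  ultimately show ?thesis
    unfolding Lop_def by (simp add: fsum_scale scale_right_distrib mult.commute)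
qed

end

locale Lr_vacuum_module = Lr_module r d scale rho
  for r d and scale :: "complex \<Rightarrow> 'v::ab_group_add \<Rightarrow> 'v" and rho +
  fixes w :: 'v
  assumes vacuum: "hw_vector d rho w"
begin

text \<open>For a > 0, v^{ii}(a,-a) = v^{ii}(-a,a) + a is not in B_+, hence the exclusion.\<close>
lemma rho_vacuum_eq_0:
  assumes ij: "i \<in> {1..d}" "j \<in> {1..d}" and sign: "0 \<le> a \<or> 0 \<le> b"
    and "\<not> (i = j \<and> a + b = 0 \<and> 0 < a)"
  shows "rho i j a b w = 0"
proof -
  have in_B_plus: "\<And>i j a b. i \<in> {1..d} \<Longrightarrow> j \<in> {1..d} \<Longrightarrow> i < j \<or> (i = j \<and> a \<le> b)
      \<Longrightarrow> 0 \<le> a \<or> 0 \<le> b \<Longrightarrow> rho i j a b w = 0"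
    using vacuum unfolding hw_vector_def by blast
  consider "i < j \<or> (i = j \<and> a \<le> b)" | "j < i \<or> (i = j \<and> b < a \<and> a + b \<noteq> 0)"
    using assms(4) by linarith
  then show ?thesis
  proof cases
    case 1
    show ?thesis by (rule in_B_plus[OF ij 1 sign])
  next
    case 2
    then have "rho i j a b = rho j i b a" using ij by (intro rho_swap) auto
    moreover have "rho j i b a w = 0" using 2 ij sign by (intro in_B_plus) auto
    ultimately show ?thesis by simp
  qed
qed

lemma rho_rho_vacuum:
  assumes "i \<in> {1..d}" "j \<in> {1..d}" "k \<in> {1..d}" "l \<in> {1..d}" and "rho i j m n w = 0"
  shows "rho i j m n (rho k l p q w) =
          (if j = k \<and> n + p = 0 then scale (of_int n) (rimg r scale rho i l m q w) else 0)
        + (if j = l \<and> n + q = 0 then scale (of_int n) (rimg r scale rho i k m p w) else 0)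
        + (if i = k \<and> m + p = 0 then scale (of_int m) (rimg r scale rho l j q n w) else 0)
        + (if i = l \<and> m + q = 0 then scale (of_int m) (rimg r scale rho k j p n w) else 0)"
  using rho_commutator[OF assms(1-4), of m n p q w] assms by (simp add: rho_zero)

lemma Lop_minus2_vacuum:
  assumes "i \<in> {1..d}" "j \<in> {1..d}"
  shows "Lop scale rho i j (-2) w = scale (1/2) (rho i j (-1) (-1) w)"
proof -
  have vanish: "rho i j (-2 - h) h w = 0" if "h \<noteq> -1" for h
    using that by (intro rho_vacuum_eq_0[OF assms]) auto
  have "fsum (\<lambda>h. rho i j (-2 - h) h w) = rho i j (-1) (-1) w + 0"
    by (rule fsum_two_points[where a = "-1" and b = "-1"]) (simp add: vanish)
  then show ?thesis unfolding Lop_def by simp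
qed

lemma rho_ii_rho_ij_vacuum:
  assumes ij: "i \<in> {1..d}" "j \<in> {1..d}" "i \<noteq> j" and "m < 0" "n < 0"
  shows "rho i i (-1 - k) k (rho i j m n w)
           = (if k = -m then scale (of_int (-m)) (rho i j (m - 1) n w) else 0)
           + (if k = m - 1 then scale (of_int (-m)) (rho i j (m - 1) n w) else 0)"
proof -
  have "rho i i (-1 - k) k w = 0" using ij by (intro rho_vacuum_eq_0) auto
  from rho_rho_vacuum[OF ij(1) ij(1) ij(1) ij(2) this, of m n]
  have "rho i i (-1 - k) k (rho i j m n w) =
          (if k + m = 0 then scale (of_int k) (rho i j (-1 - k) n w) else 0)
        + (if m - 1 - k = 0 then scale (of_int (-1 - k)) (rho j i n k w) else 0)"
    using assms by (simp add: rimg_eq_rho)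
  moreover have "rho j i n (m - 1) = rho i j (m - 1) n" using ij by (intro rho_swap) auto
  ultimately show ?thesis by auto
qed

lemma Lop_ii_minus1_rho_ij_vacuum:
  assumes "i \<in> {1..d}" "j \<in> {1..d}" "i \<noteq> j" "m < 0" "n < 0"
  shows "Lop scale rho i i (-1) (rho i j m n w) = scale (of_int (-m)) (rho i j (m - 1) n w)"
proof -
  let ?y = "scale (of_int (-m)) (rho i j (m - 1) n w)"
  have "fsum (\<lambda>k. rho i i (-1 - k) k (rho i j m n w)) = ?y + ?y"
    by (rule fsum_two_points) (rule rho_ii_rho_ij_vacuum[OF assms])
  also have "\<dots> = scale 2 ?y"
    by (metis one_add_one scale_left_distrib scale_one)
  finally show ?thesis
    unfolding Lop_def by simp
qed

lemma rho_ij_rho_ij_vacuum: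
  assumes ij: "i \<in> {1..d}" "j \<in> {1..d}" "i \<noteq> j" and "m < 0" "n < 0"
  shows "rho i j (-1 - k) k (rho i j n m w)
           = (if k = -m then scale (of_int (-m)) (rho i i (m - 1) n w) else 0)
           + (if k = n - 1 then scale (of_int (-n)) (rho j j m (n - 1) w) else 0)"
proof -
  have "rho i j (-1 - k) k w = 0" using ij by (intro rho_vacuum_eq_0) auto
  from rho_rho_vacuum[OF ij(1) ij(2) ij(1) ij(2) this, of n m]
  have "rho i j (-1 - k) k (rho i j n m w) =
          (if k + m = 0 then scale (of_int k) (rimg r scale rho i i (-1 - k) n w) else 0)
        + (if n - 1 - k = 0 then scale (of_int (-1 - k)) (rimg r scale rho j j m k w) else 0)"
    using ij by simp
  then show ?thesis using assms by (auto simp: rimg_eq_rho)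
qed

lemma Lop_ij_minus1_rho_ij_vacuum:
  assumes "i \<in> {1..d}" "j \<in> {1..d}" "i \<noteq> j" "m < 0" "n < 0"
  shows "Lop scale rho i j (-1) (rho i j n m w) = scale (1/2)
           (scale (of_int (-m)) (rho i i (m - 1) n w) + scale (of_int (-n)) (rho j j m (n - 1) w))"
  using fsum_two_points[OF rho_ij_rho_ij_vacuum[OF assms]] assms(3)
  unfolding Lop_def by simp

lemma rho_ii_rho_ii_vacuum:
  assumes i: "i \<in> {1..d}" and "p < 0" "q < 0" "0 \<le> k"
  shows "rho i i (-k) k (rho i i p q w)
           = (if k = -p then scale (of_int (-p)) (rho i i p q w) else 0)
           + (if k = -q then scale (of_int (-q)) (rho i i p q w) else 0)"
proof -
  have "rho i i (-k) k w = 0" using i assms by (intro rho_vacuum_eq_0) auto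
  from rho_rho_vacuum[OF i i i i this, of p q]
  have "rho i i (-k) k (rho i i p q w) =
          (if k + p = 0 then scale (of_int k) (rimg r scale rho i i (-k) q w) else 0)
        + (if k + q = 0 then scale (of_int k) (rimg r scale rho i i (-k) p w) else 0)"
    using assms by simp
  moreover have "rho i i q p = rho i i p q" using i assms by (intro rho_swap) auto
  ultimately show ?thesis using assms by (auto simp: rimg_eq_rho)
qed

lemma rho_ii_rho_jj_vacuum:
  assumes "i \<in> {1..d}" "j \<in> {1..d}" "i \<noteq> j" "0 \<le> k"
  shows "rho i i (-k) k (rho j j p q w) = 0"
proof -
  have "rho i i (-k) k w = 0" using assms by (intro rho_vacuum_eq_0) auto
  from rho_rho_vacuum[OF assms(1) assms(1) assms(2) assms(2) this, of p q]
  show ?thesis using assms(3) by simp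
qed

lemma Lop_ii_0_rho_ii_vacuum:
  assumes "i \<in> {1..d}" "p < 0" "q < 0"
  shows "Lop scale rho i i 0 (rho i i p q w) = scale (of_int (- p - q)) (rho i i p q w)"
proof -
  let ?A = "rho i i p q w"
  have "fsum (\<lambda>k. if 0 < k then rho i i (-k) k ?A else 0) = scale (of_int (-p)) ?A + scale (of_int (-q)) ?A"
  proof (rule fsum_two_points)
    fix k :: int
    show "(if 0 < k then rho i i (-k) k ?A else 0)
            = (if k = -p then scale (of_int (-p)) ?A else 0) + (if k = -q then scale (of_int (-q)) ?A else 0)"
      using rho_ii_rho_ii_vacuum[OF assms, of k] assms by (cases "0 < k") auto
  qed
  also have "\<dots> = scale (of_int (- p - q)) ?A"
    by (subst scale_left_distrib[symmetric]) simp
  finally show ?thesis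
    using rho_ii_rho_ii_vacuum[OF assms, of 0] assms unfolding Lop_def by simp
qed

lemma Lop_ii_0_Lop_ij_minus1_rho_ij_vacuum:
  assumes ij: "i \<in> {1..d}" "j \<in> {1..d}" "i \<noteq> j" and "m < 0" "n < 0"
  shows "Lop scale rho i i 0 (Lop scale rho i j (-1) (rho i j n m w))
           = scale (of_int m * of_int (m + n - 1) / 2) (rho i i (m - 1) n w)"
proof -
  define A where "A = rho i i (m - 1) n w"
  define V where "V = scale (1/2) (scale (of_int (-m)) A + scale (of_int (-n)) (rho j j m (n - 1) w))"
  have "rho i i (-k) k V = scale (of_int (-m) / 2) (rho i i (-k) k A)" if "0 \<le> k" for k
    unfolding V_def rho_add[OF ij(1) ij(1)] rho_scale[OF ij(1) ij(1)] rho_ii_rho_jj_vacuum[OF ij that]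
    by (simp add: mult.commute)
  then have "Lop scale rho i i 0 V = scale (of_int (-m) / 2) (Lop scale rho i i 0 A)"
    by (rule Lop_ii_0_scale_cong)
  also have "\<dots> = scale (of_int (-m) / 2 * of_int (- (m - 1) - n)) A"
    unfolding A_def using assms by (simp add: Lop_ii_0_rho_ii_vacuum)
  also have "\<dots> = scale (of_int m * of_int (m + n - 1) / 2) A"
    by (rule arg_cong[where f = "\<lambda>c. scale c A"]) (simp add: field_simps)
  finally show ?thesis
    using Lop_ij_minus1_rho_ij_vacuum[OF assms] unfolding V_def A_def by simp
qed

end

theorem lemma3p2:
  fixes r :: complex and d :: nat
    and scale :: "complex \<Rightarrow> 'v::ab_group_add \<Rightarrow> 'v"
    and rho :: "nat \<Rightarrow> nat \<Rightarrow> int \<Rightarrow> int \<Rightarrow> 'v \<Rightarrow> 'v"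
    and w :: 'v
  assumes "2 \<le> d"
    and "is_Lr_rep r d scale rho"
    and "hw_vector d rho w"
  shows "(\<forall>i\<in>{1..d}. \<forall>j\<in>{1..d}.
            rho i j (-1) (-1) w = scale 2 (Lop scale rho i j (-2) w))
       \<and> (\<forall>i\<in>{1..d}. \<forall>j\<in>{1..d}. \<forall>m n. i \<noteq> j \<and> m < 0 \<and> n < 0 \<longrightarrow>
            rho i j (m - 1) n w
              = scale (- 1 / of_int m) (Lop scale rho i i (-1) (rho i j m n w)))
       \<and> (\<forall>i\<in>{1..d}. \<forall>j\<in>{1..d}. \<forall>m n. i \<noteq> j \<and> m < 0 \<and> n < 0 \<longrightarrow>
            rho i i (m - 1) n w
              = scale (2 / (of_int m * of_int (m + n - 1)))
                  (Lop scale rho i i 0 (Lop scale rho i j (-1) (rho i j n m w))))"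
proof -
  interpret Lr_vacuum_module r d scale rho w
    using assms(2,3) by unfold_locales
  show ?thesis
  proof (intro conjI ballI allI impI)
    fix i j assume "i \<in> {1..d}" "j \<in> {1..d}"
    then show "rho i j (-1) (-1) w = scale 2 (Lop scale rho i j (-2) w)"
      by (simp add: Lop_minus2_vacuum)
  next
    fix i j and m n :: int
    assume "i \<in> {1..d}" "j \<in> {1..d}" and "i \<noteq> j \<and> m < 0 \<and> n < 0"
    then show "rho i j (m - 1) n w = scale (- 1 / of_int m) (Lop scale rho i i (-1) (rho i j m n w))"
      by (simp add: Lop_ii_minus1_rho_ij_vacuum)
  next
    fix i j and m n :: int
    assume "i \<in> {1..d}" "j \<in> {1..d}" and ij_mn: "i \<noteq> j \<and> m < 0 \<and> n < 0"
    then have "(of_int (m + n - 1) :: complex) \<noteq> 0" by (simp only: of_int_eq_0_iff) linarith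
    with ij_mn show "rho i i (m - 1) n w = scale (2 / (of_int m * of_int (m + n - 1)))
                  (Lop scale rho i i 0 (Lop scale rho i j (-1) (rho i j n m w)))"
      using \<open>i \<in> {1..d}\<close> \<open>j \<in> {1..d}\<close> by (simp add: Lop_ii_0_Lop_ij_minus1_rho_ij_vacuum)
  qed
qed

end
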